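(* Let $\alpha,\beta>0$, $k\ge0$ an integer, and $\lambda=\Gamma(\alpha k+\alpha+\beta)/\Gamma(\alpha k+\beta)$. If $X\sim\mathrm{MLFD}(\lambda,\alpha,\beta)$, then $P(X=k)=P(X=k+1)$ and $P(X=k)>P(X=j)$ for every integer $j\ge0$ with $j\notin\{k,k+1\}$; i.e. $X$ has exactly the two modes $k$ and $k+1$.
   Context: For $\alpha>0,\beta>0$ and $z\in\mathbb{C}$, the generalized Mittag-Leffler function is $E_{\alpha,\beta}(z)=\sum_{k=0}^\infty z^k/\Gamma(\alpha k+\beta)$. For $\lambda,\alpha,\beta>0$, the Mittag-Leffler function distribution $\mathrm{MLFD}(\lambda,\alpha,\beta)$ is the distribution on $\{0,1,2,\dots\}$ with $P(X=k)=\lambda^k/\{\Gamma(\alpha k+\beta)E_{\alpha,\beta}(\lambda)\}$. *)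

theory Defs
  imports "HOL-Analysis.Analysis"
begin

definition mittag_leffler :: "real \<Rightarrow> real \<Rightarrow> real \<Rightarrow> real" where
  "mittag_leffler \<alpha> \<beta> z = (\<Sum>k. z ^ k / Gamma (\<alpha> * real k + \<beta>))"

definition mlfd_pmf :: "real \<Rightarrow> real \<Rightarrow> real \<Rightarrow> nat \<Rightarrow> real" where
  "mlfd_pmf lam \<alpha> \<beta> k = lam ^ k / (Gamma (\<alpha> * real k + \<beta>) * mittag_leffler \<alpha> \<beta> lam)"

end

theory Submission
  imports Defs
begin

(* Write t j = lam^j / Gamma(alpha j + beta) for the terms of the
   Mittag-Leffler series, so that P(X = j) = t j / E with E = sum_j t j > 0.
   Consecutive terms satisfy t (j+1) = t j * lam / r j, where
   r j = Gamma(alpha j + alpha + beta) / Gamma(alpha j + beta).  Because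
   x |-> Gamma(x + a) / Gamma x is strictly increasing on (0, oo) (log-convexity
   of Gamma: the digamma function is strictly increasing), r is strictly
   increasing in j.  With lam = r k the terms therefore increase strictly up to
   index k, satisfy t k = t (k+1), and decrease strictly from k+1 on; a purely
   order-theoretic lemma turns this into "k and k+1 are the only maxima".
   The same ratio bound gives convergence of the series (ratio test), hence E > 0.
   The file develops: the Gamma-ratio monotonicity, the two-mode lemma for
   sequences, the properties of the series terms, and finally the theorem. *)

(* The shifted log-Gamma difference is strictly increasing; by the mean value
   theorem this reduces to strict monotonicity of the digamma function. *)
lemma ln_Gamma_shift_diff_strict_mono:
  fixes a x y :: real
  assumes "a > 0" "x > 0" "x < y"
  shows "ln_Gamma (x + a) - ln_Gamma x < ln_Gamma (y + a) - ln_Gamma y"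
proof -
  obtain \<xi> where \<xi>: "x < \<xi>" "\<xi> < y"
    and mvt: "(ln_Gamma (y + a) - ln_Gamma y) - (ln_Gamma (x + a) - ln_Gamma x)
          = (y - x) * (Digamma (\<xi> + a) - Digamma \<xi>)"
    using MVT2[of x y "\<lambda>t. ln_Gamma (t + a) - ln_Gamma t"
                     "\<lambda>t. Digamma (t + a) - Digamma t"] assms
    by (force intro!: derivative_eq_intros elim!: nonpos_Ints_cases)
  have "Digamma \<xi> < Digamma (\<xi> + a)"
    using \<xi> assms by (intro Digamma_real_strict_mono) auto
  with mvt \<open>x < y\<close> show ?thesis
    by (smt (verit) mult_pos_pos)
qed

lemma Gamma_shift_ratio_strict_mono:
  fixes a x y :: real
  assumes "a > 0" "x > 0" "x < y"
  shows "Gamma (x + a) / Gamma x < Gamma (y + a) / Gamma y"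
proof -
  have "Gamma (x + a) / Gamma x = exp (ln_Gamma (x + a) - ln_Gamma x)"
    using assms by (simp add: Gamma_real_pos_exp exp_diff)
  also have "\<dots> < exp (ln_Gamma (y + a) - ln_Gamma y)"
    using ln_Gamma_shift_diff_strict_mono[OF assms] by simp
  also have "\<dots> = Gamma (y + a) / Gamma y"
    using assms by (simp add: Gamma_real_pos_exp exp_diff)
  finally show ?thesis .
qed

lemma two_adjacent_modes:
  fixes t :: "nat \<Rightarrow> 'a :: linorder"
  assumes up: "\<And>j. j < k \<Longrightarrow> t j < t (Suc j)"
    and tie: "t k = t (Suc k)"
    and down: "\<And>j. k < j \<Longrightarrow> t (Suc j) < t j"
    and j: "j \<notin> {k, Suc k}"
  shows "t j < t k"
proof (cases "j < k")
  case True
  then have "Suc j \<le> k" by simp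
  then show ?thesis
  proof (induction rule: dec_induct)
    case base show ?case using up True .
  next
    case (step n) then show ?case using up[of n] by simp
  qed
next
  case False
  with j have "Suc (Suc k) \<le> j" by auto
  then have "t j < t (Suc k)"
  proof (induction rule: dec_induct)
    case base show ?case using down[of "Suc k"] by simp
  next
    case (step n) then show ?case using down[of n] by simp
  qed
  with tie show ?thesis by simp
qed

definition ml_term :: "real \<Rightarrow> real \<Rightarrow> real \<Rightarrow> nat \<Rightarrow> real" where
  "ml_term \<alpha> \<beta> z j = z ^ j / Gamma (\<alpha> * real j + \<beta>)"

(* The ratio governing consecutive terms: ml_term (j+1) = ml_term j * z / ml_ratio j. *)
definition ml_ratio :: "real \<Rightarrow> real \<Rightarrow> nat \<Rightarrow> real" where
  "ml_ratio \<alpha> \<beta> j = Gamma (\<alpha> * real j + \<alpha> + \<beta>) / Gamma (\<alpha> * real j + \<beta>)"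

lemma mittag_leffler_eq_suminf_ml_term:
  "mittag_leffler \<alpha> \<beta> z = suminf (ml_term \<alpha> \<beta> z)"
  unfolding mittag_leffler_def ml_term_def ..

lemma mlfd_pmf_eq_ml_term:
  "mlfd_pmf z \<alpha> \<beta> j = ml_term \<alpha> \<beta> z j / mittag_leffler \<alpha> \<beta> z"
  by (simp add: mlfd_pmf_def ml_term_def)

lemma ml_term_pos:
  assumes "\<alpha> \<ge> 0" "\<beta> > 0" "z > 0"
  shows "ml_term \<alpha> \<beta> z j > 0"
  using assms by (simp add: ml_term_def add_nonneg_pos)

lemma ml_ratio_pos:
  assumes "\<alpha> \<ge> 0" "\<beta> > 0"
  shows "ml_ratio \<alpha> \<beta> j > 0"
  using assms by (simp add: ml_ratio_def add_nonneg_pos)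

lemma ml_ratio_strict_mono:
  assumes "\<alpha> > 0" "\<beta> > 0" "i < j"
  shows "ml_ratio \<alpha> \<beta> i < ml_ratio \<alpha> \<beta> j"
proof -
  have "\<alpha> * real i + \<beta> > 0" "\<alpha> * real i + \<beta> < \<alpha> * real j + \<beta>"
    using assms by (simp_all add: add_nonneg_pos)
  from Gamma_shift_ratio_strict_mono[OF assms(1) this] show ?thesis
    by (simp add: ml_ratio_def add_ac)
qed

lemma ml_term_Suc:
  assumes "\<alpha> \<ge> 0" "\<beta> > 0"
  shows "ml_term \<alpha> \<beta> z (Suc j) = ml_term \<alpha> \<beta> z j * z / ml_ratio \<alpha> \<beta> j"
proof -
  have "\<alpha> * real (Suc j) + \<beta> = \<alpha> * real j + \<alpha> + \<beta>" by (simp add: algebra_simps)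
  moreover have "Gamma (\<alpha> * real j + \<beta>) > 0" using assms by (simp add: add_nonneg_pos)
  ultimately show ?thesis by (simp add: ml_term_def ml_ratio_def field_simps)
qed

lemma ml_term_Suc_less_iff:
  assumes "\<alpha> \<ge> 0" "\<beta> > 0" "z > 0"
  shows "ml_term \<alpha> \<beta> z (Suc j) < ml_term \<alpha> \<beta> z j \<longleftrightarrow> z < ml_ratio \<alpha> \<beta> j"
    and "ml_term \<alpha> \<beta> z j < ml_term \<alpha> \<beta> z (Suc j) \<longleftrightarrow> ml_ratio \<alpha> \<beta> j < z"
  using ml_term_pos[OF assms, of j] ml_ratio_pos[OF assms(1,2), of j]
  by (simp_all add: ml_term_Suc[OF assms(1,2)] field_simps)

(* Once z lies below some ml_ratio N, the ratio test applies from N on. *)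
lemma ml_term_summable:
  assumes "\<alpha> > 0" "\<beta> > 0" "z > 0" "z < ml_ratio \<alpha> \<beta> N"
  shows "summable (ml_term \<alpha> \<beta> z)"
proof (rule summable_ratio_test[where c = "z / ml_ratio \<alpha> \<beta> N" and N = N])
  have pos: "\<And>j. ml_ratio \<alpha> \<beta> j > 0" using assms by (simp add: ml_ratio_pos)
  show "z / ml_ratio \<alpha> \<beta> N < 1" using assms(4) pos[of N] by simp
  fix n assume "N \<le> n"
  then have "ml_ratio \<alpha> \<beta> N \<le> ml_ratio \<alpha> \<beta> n"
    using ml_ratio_strict_mono[OF assms(1,2), of N n] by (cases "N = n") auto
  then have "z / ml_ratio \<alpha> \<beta> n \<le> z / ml_ratio \<alpha> \<beta> N"
    using assms(3) pos by (intro divide_left_mono) auto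
  moreover have "ml_term \<alpha> \<beta> z n > 0" using assms by (simp add: ml_term_pos)
  ultimately have "ml_term \<alpha> \<beta> z n * (z / ml_ratio \<alpha> \<beta> n)
      \<le> ml_term \<alpha> \<beta> z n * (z / ml_ratio \<alpha> \<beta> N)"
    by (intro mult_left_mono) auto
  with assms pos[of n] show
    "norm (ml_term \<alpha> \<beta> z (Suc n)) \<le> z / ml_ratio \<alpha> \<beta> N * norm (ml_term \<alpha> \<beta> z n)"
    by (simp add: ml_term_Suc ml_term_pos abs_of_pos mult.commute)
qed

theorem mainTheorem7:
  fixes \<alpha> \<beta> lam :: real and k :: nat
  assumes "\<alpha> > 0" and "\<beta> > 0"
    and "lam = Gamma (\<alpha> * real k + \<alpha> + \<beta>) / Gamma (\<alpha> * real k + \<beta>)"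
  shows "mlfd_pmf lam \<alpha> \<beta> k = mlfd_pmf lam \<alpha> \<beta> (k + 1)
    \<and> (\<forall>j::nat. j \<notin> {k, k + 1} \<longrightarrow> mlfd_pmf lam \<alpha> \<beta> k > mlfd_pmf lam \<alpha> \<beta> j)"
proof -
  let ?t = "ml_term \<alpha> \<beta> lam"
  have lam: "lam = ml_ratio \<alpha> \<beta> k" using assms(3) by (simp add: ml_ratio_def)
  have ab: "\<alpha> \<ge> 0" "\<beta> > 0" using assms(1,2) by auto
  have lam_pos: "lam > 0" using lam ml_ratio_pos[OF ab] by simp
  note ratio_mono = ml_ratio_strict_mono[OF assms(1,2)]
  have up: "?t j < ?t (Suc j)" if "j < k" for j
    using that ratio_mono ml_term_Suc_less_iff(2)[OF ab lam_pos] by (simp add: lam)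
  have down: "?t (Suc j) < ?t j" if "k < j" for j
    using that ratio_mono ml_term_Suc_less_iff(1)[OF ab lam_pos] by (simp add: lam)
  have tie: "?t k = ?t (Suc k)"
    using ml_term_Suc[OF ab, of lam k] ml_ratio_pos[OF ab, of k] lam by simp
  have "summable ?t"
    using ml_term_summable[OF assms(1,2) lam_pos] ratio_mono[of k "Suc k"] lam by simp
  then have E_pos: "mittag_leffler \<alpha> \<beta> lam > 0"
    by (simp add: mittag_leffler_eq_suminf_ml_term suminf_pos ml_term_pos[OF ab lam_pos])
  show ?thesis
    using tie two_adjacent_modes[of k ?t, OF up tie down] E_pos
    by (auto simp: mlfd_pmf_eq_ml_term divide_strict_right_mono)
qed

end
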